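(* Let $M=uI+N\in F(\mathcal{R})$, where $u$ is a positive unit of $\mathcal{R}$ and $N$ is the $2\times2$ matrix with rows $\lambda_1v$ and $\lambda_2v$, $v=(1-x,1-y)$, $\lambda_1,\lambda_2\in\mathcal{R}$, $\lambda_1(1-x)+\lambda_2(1-y)=1-u$. Then (i) $M^n=u^nI+(1+u+u^2+\dots+u^{n-1})N$ for every integer $n>1$; (ii) if $M$ lies in the commutator subgroup of $F(\mathcal{R})$ then $\lambda_1,\lambda_2\in\Sigma$; more generally, if $M$ lies in the $j$-th term $F(\mathcal{R})_j$ of the lower central series of $F(\mathcal{R})$ ($j\ge1$), then $\lambda_1,\lambda_2\in\Sigma^{j-1}$.
   Context: $\mathcal{R}=\mathbb{Z}[x,x^{-1},y,y^{-1}]$; positive units are the monomials $x^iy^j$; $\Sigma$ is the augmentation ideal of $\mathcal{R}$ (kernel of $x,y\mapsto1$ to $\mathbb{Z}$), with $\Sigma^0=\mathcal{R}$. $F(\mathcal{R})$ is the subgroup of $GL_2(\mathcal{R})$ generated by $M_1=\begin{pmatrix}1&1-y\\0&x\end{pmatrix}$ and $M_2=\begin{pmatrix}y&0\\1-x&1\end{pmatrix}$. Every element of $F(\mathcal{R})$ has the form $uI+N$ described in the claim (and $u,\lambda_1,\lambda_2$ are determined by the element). The lower central series is $G_1=G$, $G_j=[G,G_{j-1}]$. *)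

theory Defs
  imports "HOL-Library.Poly_Mapping" "HOL-Library.Product_Plus"
          "HOL-Algebra.Generated_Groups"
begin

text \<open>The ring R = Z[x,x^-1,y,y^-1] of integral Laurent polynomials in two variables,
  realised as finitely supported functions Z x Z -> Z (the coefficient of x^i y^j is
  the value at (i,j)); multiplication is convolution.\<close>
type_synonym laurent = "(int \<times> int) \<Rightarrow>\<^sub>0 int"

definition X :: laurent where "X = Poly_Mapping.single (1, 0) 1"
definition Y :: laurent where "Y = Poly_Mapping.single (0, 1) 1"

definition pos_unit :: "laurent \<Rightarrow> bool" where
  "pos_unit u \<longleftrightarrow> (\<exists>i j :: int. u = Poly_Mapping.single (i, j) 1)"

definition aug :: "laurent \<Rightarrow> int" where
  "aug p = (\<Sum>k\<in>Poly_Mapping.keys p. Poly_Mapping.lookup p k)"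

definition Sigma_ideal :: "laurent set" where
  "Sigma_ideal = {p. aug p = 0}"

inductive in_Sigma_pow :: "nat \<Rightarrow> laurent \<Rightarrow> bool" where
  pow0: "in_Sigma_pow 0 p"
| zero: "in_Sigma_pow (Suc k) 0"
| prod: "a \<in> Sigma_ideal \<Longrightarrow> in_Sigma_pow k b \<Longrightarrow> in_Sigma_pow (Suc k) (a * b)"
| add: "in_Sigma_pow (Suc k) p \<Longrightarrow> in_Sigma_pow (Suc k) q \<Longrightarrow> in_Sigma_pow (Suc k) (p + q)"

definition Sigma_pow :: "nat \<Rightarrow> laurent set" where
  "Sigma_pow j = {p. in_Sigma_pow j p}"

text \<open>2x2 matrices over R: M2 a b c d is the matrix with rows (a,b) and (c,d).\<close>
datatype mat2 = M2 laurent laurent laurent laurent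

fun mmul :: "mat2 \<Rightarrow> mat2 \<Rightarrow> mat2" where
  "mmul (M2 a b c d) (M2 e f g h) =
     M2 (a * e + b * g) (a * f + b * h) (c * e + d * g) (c * f + d * h)"

fun madd :: "mat2 \<Rightarrow> mat2 \<Rightarrow> mat2" where
  "madd (M2 a b c d) (M2 e f g h) = M2 (a + e) (b + f) (c + g) (d + h)"

fun msmult :: "laurent \<Rightarrow> mat2 \<Rightarrow> mat2" where
  "msmult s (M2 a b c d) = M2 (s * a) (s * b) (s * c) (s * d)"

definition mid :: mat2 where "mid = M2 1 0 0 1"

definition Mat2 :: "mat2 monoid" where
  "Mat2 = \<lparr>carrier = UNIV, mult = mmul, one = mid\<rparr>"

definition GL2 :: "mat2 monoid" where
  "GL2 = units_of Mat2"

definition Mgen1 :: mat2 where "Mgen1 = M2 1 (1 - Y) 0 X"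
definition Mgen2 :: mat2 where "Mgen2 = M2 Y 0 (1 - X) 1"

definition FR :: "mat2 set" where
  "FR = generate GL2 {Mgen1, Mgen2}"

text \<open>Lower central series: LCS 1 = F(R), LCS (j+1) = [F(R), LCS j]
  (subgroup generated by commutators). Index 0 is an unused convention.\<close>
fun LCS :: "nat \<Rightarrow> mat2 set" where
  "LCS 0 = FR"
| "LCS (Suc 0) = FR"
| "LCS (Suc (Suc j)) = generate GL2
     {g \<otimes>\<^bsub>GL2\<^esub> h \<otimes>\<^bsub>GL2\<^esub> inv\<^bsub>GL2\<^esub> g \<otimes>\<^bsub>GL2\<^esub> inv\<^bsub>GL2\<^esub> h | g h. g \<in> FR \<and> h \<in> LCS (Suc j)}"

definition Nmat :: "laurent \<Rightarrow> laurent \<Rightarrow> mat2" where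
  "Nmat l1 l2 = M2 (l1 * (1 - X)) (l1 * (1 - Y)) (l2 * (1 - X)) (l2 * (1 - Y))"

end

theory Submission
  imports Defs "HOL-Library.Product_Lexorder"
begin

text \<open>Matrices of this shape multiply by the rule
  \<open>(uI + N)(wI + N') = uwI + (N + uN')\<close>, so the admissible ones (\<open>u\<close> a positive unit, the
  constraint \<open>\<lambda>1(1-x) + \<lambda>2(1-y) = 1-u\<close>) form a subgroup of \<open>GL\<^sub>2\<close> containing both generators,
  whence contains \<open>F(R)\<close>; powers are then a geometric sum. The commutator of \<open>uI + N(\<lambda>)\<close> and
  \<open>wI + N(\<mu>)\<close> is \<open>I + N((1-w)\<lambda> + (u-1)\<mu>)\<close>, and \<open>1-u, 1-w \<in> \<Sigma>\<close>. Hence commutators with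
  \<open>\<mu> \<in> \<Sigma>\<^sup>j\<close> have \<open>\<lambda> \<in> \<Sigma>\<^sup>j\<^sup>+\<^sup>1\<close>; as these matrices \<open>I + N(\<lambda>)\<close> with \<open>\<lambda> \<in> \<Sigma>\<^sup>k\<close> again form a
  subgroup, induction along the lower central series gives (ii). Finally \<open>\<lambda>\<close> is determined by
  the matrix because \<open>R\<close> is a domain and \<open>x, y \<noteq> 1\<close>.\<close>

text \<open>The lexicographic order on exponents makes the Laurent ring an integral domain.\<close>
instance prod :: (linordered_ab_group_add, linordered_ab_group_add) ordered_cancel_comm_monoid_add
  by standard (auto simp: less_eq_prod_def)

lemma one_laurent_eq_single: "(1::laurent) = Poly_Mapping.single (0, 0) 1"
  by (metis single_one zero_prod_def)

lemma pos_unit_one: "pos_unit 1"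
  unfolding pos_unit_def one_laurent_eq_single by blast

lemma pos_unit_mult:
  assumes "pos_unit u" and "pos_unit w"
  shows "pos_unit (u * w)"
proof -
  obtain i j i' j' where "u = Poly_Mapping.single (i, j) 1" and "w = Poly_Mapping.single (i', j') 1"
    using assms unfolding pos_unit_def by blast
  then have "u * w = Poly_Mapping.single (i + i', j + j') 1" by (simp add: mult_single)
  then show ?thesis unfolding pos_unit_def by blast
qed

lemma pos_unit_inverse:
  assumes "pos_unit u"
  obtains u' where "pos_unit u'" and "u * u' = 1"
proof -
  obtain i j where u: "u = Poly_Mapping.single (i, j) 1"
    using assms unfolding pos_unit_def by blast
  show thesis
  proof
    show "pos_unit (Poly_Mapping.single (- i, - j) 1)"
      unfolding pos_unit_def by blast
    show "u * Poly_Mapping.single (- i, - j) 1 = 1"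
      unfolding u mult_single one_laurent_eq_single by simp
  qed
qed

lemma X_neq_1: "X \<noteq> 1" and Y_neq_1: "Y \<noteq> 1"
  unfolding X_def Y_def one_laurent_eq_single
  by (metis lookup_single_eq lookup_single_not_eq prod.inject zero_neq_one)+

lemma aug_eq_sum:
  assumes "finite S" and "Poly_Mapping.keys p \<subseteq> S"
  shows "aug p = sum (Poly_Mapping.lookup p) S"
  unfolding aug_def by (rule sum.mono_neutral_left[OF assms]) (simp add: in_keys_iff)

lemma aug_diff: "aug (p - q) = aug p - aug q"
proof -
  let ?S = "Poly_Mapping.keys p \<union> Poly_Mapping.keys q"
  have "aug (p - q) = sum (Poly_Mapping.lookup (p - q)) ?S"
    using aug_eq_sum[OF _ keys_diff] by simp
  also have "\<dots> = sum (Poly_Mapping.lookup p) ?S - sum (Poly_Mapping.lookup q) ?S"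
    by (simp add: lookup_minus sum_subtractf)
  also have "\<dots> = aug p - aug q"
    using aug_eq_sum[of ?S p] aug_eq_sum[of ?S q] by simp
  finally show ?thesis .
qed

lemma aug_single_one: "aug (Poly_Mapping.single k 1) = 1"
  by (simp add: aug_def)

lemma one_minus_pos_unit_in_Sigma: "pos_unit u \<Longrightarrow> 1 - u \<in> Sigma_ideal"
  unfolding pos_unit_def Sigma_ideal_def
  by (auto simp: aug_diff one_laurent_eq_single aug_single_one)

lemma in_Sigma_pow_zero: "in_Sigma_pow k 0"
  by (cases k) (auto intro: in_Sigma_pow.intros)

lemma in_Sigma_pow_add: "in_Sigma_pow k p \<Longrightarrow> in_Sigma_pow k q \<Longrightarrow> in_Sigma_pow k (p + q)"
  by (cases k) (auto intro: in_Sigma_pow.intros)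

lemma in_Sigma_pow_uminus: "in_Sigma_pow k p \<Longrightarrow> in_Sigma_pow k (- p)"
proof (induction rule: in_Sigma_pow.induct)
  case (prod a k b)
  then show ?case using in_Sigma_pow.prod[of a k "- b"] by simp
next
  case (add k p q)
  then show ?case using in_Sigma_pow.add[of k "- p" "- q"] by (simp add: add.commute)
qed (auto intro: in_Sigma_pow.intros)

lemma in_Sigma_pow_Suc_mult:
  assumes "1 - u \<in> Sigma_ideal" and "in_Sigma_pow k m"
  shows "in_Sigma_pow (Suc k) ((u - 1) * m)"
proof -
  have "(u - 1) * m = (1 - u) * - m" by (simp add: algebra_simps)
  then show ?thesis using in_Sigma_pow.prod[OF assms(1) in_Sigma_pow_uminus[OF assms(2)]] by simp
qed

lemma (in group) commutator_eqI:
  assumes "a \<in> carrier G" "b \<in> carrier G" "c \<in> carrier G" and "a \<otimes> b = c \<otimes> (b \<otimes> a)"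
  shows "a \<otimes> b \<otimes> inv a \<otimes> inv b = c"
  using assms by (simp add: m_assoc)

lemma mmul_assoc: "mmul (mmul a b) c = mmul a (mmul b c)"
  by (cases a; cases b; cases c) (simp add: algebra_simps)

lemma monoid_Mat2: "monoid Mat2"
proof
  fix x show "\<one>\<^bsub>Mat2\<^esub> \<otimes>\<^bsub>Mat2\<^esub> x = x" and "x \<otimes>\<^bsub>Mat2\<^esub> \<one>\<^bsub>Mat2\<^esub> = x"
    by (cases x; simp add: Mat2_def mid_def)+
qed (auto simp: Mat2_def mmul_assoc)

lemma group_GL2: "group GL2"
  unfolding GL2_def by (rule monoid.units_group[OF monoid_Mat2])

lemma GL2_mult: "x \<otimes>\<^bsub>GL2\<^esub> y = mmul x y"
  by (simp add: GL2_def units_of_mult Mat2_def)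

lemma GL2_one: "\<one>\<^bsub>GL2\<^esub> = mid"
  by (simp add: GL2_def units_of_one Mat2_def)

lemma GL2_inverseI:
  assumes "mmul g g' = mid" and "mmul g' g = mid"
  shows "g \<in> carrier GL2" and "inv\<^bsub>GL2\<^esub> g = g'"
proof -
  have U: "g \<in> Units Mat2" unfolding Units_def using assms by (auto simp: Mat2_def)
  then show "g \<in> carrier GL2" by (simp add: GL2_def units_of_carrier)
  have "inv\<^bsub>Mat2\<^esub> g = g'"
    using monoid.inv_unique'[OF monoid_Mat2, of g g'] assms by (simp add: Mat2_def)
  then show "inv\<^bsub>GL2\<^esub> g = g'"
    unfolding GL2_def using monoid.units_of_inv[OF monoid_Mat2 U] by simp
qed

subsection \<open>Matrices of the form \<open>uI + N\<close>\<close>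

definition uIN :: "laurent \<Rightarrow> laurent \<Rightarrow> laurent \<Rightarrow> mat2" where
  "uIN u l1 l2 = madd (msmult u mid) (Nmat l1 l2)"

definition admissible :: "laurent \<Rightarrow> laurent \<Rightarrow> laurent \<Rightarrow> bool" where
  "admissible u l1 l2 \<longleftrightarrow> pos_unit u \<and> l1 * (1 - X) + l2 * (1 - Y) = 1 - u"

lemma uIN_eq: "uIN u l1 l2 = M2 (u + l1 * (1 - X)) (l1 * (1 - Y)) (l2 * (1 - X)) (u + l2 * (1 - Y))"
  by (simp add: uIN_def mid_def Nmat_def)

lemma uIN_one_zero: "uIN 1 0 0 = mid"
  by (simp add: uIN_eq mid_def)

lemma mmul_uIN:
  assumes "m1 * (1 - X) + m2 * (1 - Y) = 1 - w"
  shows "mmul (uIN u l1 l2) (uIN w m1 m2) = uIN (u * w) (l1 + u * m1) (l2 + u * m2)"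
  unfolding uIN_eq mmul.simps mat2.inject by (intro conjI; use assms in algebra)

lemma uIN_lambda_unique:
  assumes "uIN u l1 l2 = uIN w m1 m2"
  shows "l1 = m1" and "l2 = m2"
proof -
  have "l1 * (1 - Y) = m1 * (1 - Y)" and "l2 * (1 - X) = m2 * (1 - X)"
    using assms unfolding uIN_eq mat2.inject by blast+
  then show "l1 = m1" and "l2 = m2" using X_neq_1 Y_neq_1 by auto
qed

lemma admissible_mult:
  "admissible u l1 l2 \<Longrightarrow> admissible w m1 m2 \<Longrightarrow> admissible (u * w) (l1 + u * m1) (l2 + u * m2)"
proof (unfold admissible_def, elim conjE, intro conjI)
  assume c1: "l1 * (1 - X) + l2 * (1 - Y) = 1 - u" and c2: "m1 * (1 - X) + m2 * (1 - Y) = 1 - w"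
  have "(l1 + u * m1) * (1 - X) + (l2 + u * m2) * (1 - Y)
      = (l1 * (1 - X) + l2 * (1 - Y)) + u * (m1 * (1 - X) + m2 * (1 - Y))"
    by (simp add: algebra_simps)
  then show "(l1 + u * m1) * (1 - X) + (l2 + u * m2) * (1 - Y) = 1 - u * w"
    unfolding c1 c2 by (simp add: algebra_simps)
qed (rule pos_unit_mult)

lemma constraint_inverse:
  assumes "l1 * (1 - X) + l2 * (1 - Y) = 1 - u" and "u * u' = 1"
  shows "(- (u' * l1)) * (1 - X) + (- (u' * l2)) * (1 - Y) = 1 - u'"
  using assms by algebra

lemma admissible_inverse:
  "admissible u l1 l2 \<Longrightarrow> pos_unit u' \<Longrightarrow> u * u' = 1 \<Longrightarrow> admissible u' (- (u' * l1)) (- (u' * l2))"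
  unfolding admissible_def using constraint_inverse by blast

lemma uIN_inverse:
  assumes "admissible u l1 l2" and "u * u' = 1"
  shows "uIN u l1 l2 \<in> carrier GL2"
    and "inv\<^bsub>GL2\<^esub> (uIN u l1 l2) = uIN u' (- (u' * l1)) (- (u' * l2))"
proof -
  have c: "l1 * (1 - X) + l2 * (1 - Y) = 1 - u"
    using assms(1) unfolding admissible_def by blast
  have c': "(- (u' * l1)) * (1 - X) + (- (u' * l2)) * (1 - Y) = 1 - u'"
    using constraint_inverse[OF c assms(2)] .
  have "mmul (uIN u l1 l2) (uIN u' (- (u' * l1)) (- (u' * l2))) = mid"
    and "mmul (uIN u' (- (u' * l1)) (- (u' * l2))) (uIN u l1 l2) = mid"
    unfolding mmul_uIN[OF c'] mmul_uIN[OF c] uIN_one_zero[symmetric]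
    using assms(2) by (simp_all add: algebra_simps)
  then show "uIN u l1 l2 \<in> carrier GL2"
    and "inv\<^bsub>GL2\<^esub> (uIN u l1 l2) = uIN u' (- (u' * l1)) (- (u' * l2))"
    by (rule GL2_inverseI)+
qed

lemma uIN_in_GL2: "admissible u l1 l2 \<Longrightarrow> uIN u l1 l2 \<in> carrier GL2"
  using pos_unit_inverse uIN_inverse(1) unfolding admissible_def by metis

lemma uIN_pow:
  assumes "l1 * (1 - X) + l2 * (1 - Y) = 1 - u"
  shows "uIN u l1 l2 [^]\<^bsub>Mat2\<^esub> n = uIN (u ^ n) ((\<Sum>k<n. u ^ k) * l1) ((\<Sum>k<n. u ^ k) * l2)"
proof (induction n)
  case 0
  then show ?case using uIN_one_zero by (simp add: Mat2_def)
next
  case (Suc n)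
  have "uIN u l1 l2 [^]\<^bsub>Mat2\<^esub> Suc n
        = mmul (uIN (u ^ n) ((\<Sum>k<n. u ^ k) * l1) ((\<Sum>k<n. u ^ k) * l2)) (uIN u l1 l2)"
    using Suc by (simp add: Mat2_def)
  also have "\<dots> = uIN (u ^ Suc n) ((\<Sum>k<Suc n. u ^ k) * l1) ((\<Sum>k<Suc n. u ^ k) * l2)"
    unfolding mmul_uIN[OF assms] by (simp add: algebra_simps)
  finally show ?case .
qed

lemma admissible_commutator:
  assumes "admissible u l1 l2" and "admissible w m1 m2"
  shows "admissible 1 ((1 - w) * l1 + (u - 1) * m1) ((1 - w) * l2 + (u - 1) * m2)"
proof -
  have c1: "l1 * (1 - X) + l2 * (1 - Y) = 1 - u" and c2: "m1 * (1 - X) + m2 * (1 - Y) = 1 - w"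
    using assms unfolding admissible_def by blast+
  have "((1 - w) * l1 + (u - 1) * m1) * (1 - X) + ((1 - w) * l2 + (u - 1) * m2) * (1 - Y)
      = (1 - w) * (l1 * (1 - X) + l2 * (1 - Y)) + (u - 1) * (m1 * (1 - X) + m2 * (1 - Y))"
    by (simp add: algebra_simps)
  also have "\<dots> = 0"
    unfolding c1 c2 by (simp add: algebra_simps)
  finally show ?thesis
    unfolding admissible_def using pos_unit_one by simp
qed

lemma uIN_commutator:
  assumes g: "admissible u l1 l2" and h: "admissible w m1 m2"
  shows "uIN u l1 l2 \<otimes>\<^bsub>GL2\<^esub> uIN w m1 m2 \<otimes>\<^bsub>GL2\<^esub> inv\<^bsub>GL2\<^esub> (uIN u l1 l2) \<otimes>\<^bsub>GL2\<^esub> inv\<^bsub>GL2\<^esub> (uIN w m1 m2)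
         = uIN 1 ((1 - w) * l1 + (u - 1) * m1) ((1 - w) * l2 + (u - 1) * m2)"
proof (rule group.commutator_eqI[OF group_GL2])
  show "uIN u l1 l2 \<in> carrier GL2" "uIN w m1 m2 \<in> carrier GL2"
    "uIN 1 ((1 - w) * l1 + (u - 1) * m1) ((1 - w) * l2 + (u - 1) * m2) \<in> carrier GL2"
    using g h admissible_commutator[OF g h] by (auto intro: uIN_in_GL2)
  have g': "l1 * (1 - X) + l2 * (1 - Y) = 1 - u" and h': "m1 * (1 - X) + m2 * (1 - Y) = 1 - w"
    and hg: "(m1 + w * l1) * (1 - X) + (m2 + w * l2) * (1 - Y) = 1 - w * u"
    using g h admissible_mult[OF h g] unfolding admissible_def by blast+
  show "uIN u l1 l2 \<otimes>\<^bsub>GL2\<^esub> uIN w m1 m2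
      = uIN 1 ((1 - w) * l1 + (u - 1) * m1) ((1 - w) * l2 + (u - 1) * m2) \<otimes>\<^bsub>GL2\<^esub> (uIN w m1 m2 \<otimes>\<^bsub>GL2\<^esub> uIN u l1 l2)"
    unfolding GL2_mult mmul_uIN[OF h'] mmul_uIN[OF g'] mmul_uIN[OF hg] by (simp add: algebra_simps)
qed

subsection \<open>Subgroups of \<open>GL\<^sub>2(R)\<close> containing \<open>F(R)\<close> and its lower central series\<close>

definition admissible_group :: "mat2 set" where
  "admissible_group = {uIN u l1 l2 | u l1 l2. admissible u l1 l2}"

definition Sigma_congruence :: "nat \<Rightarrow> mat2 set" where
  "Sigma_congruence k =
     {uIN 1 l1 l2 | l1 l2. admissible 1 l1 l2 \<and> in_Sigma_pow k l1 \<and> in_Sigma_pow k l2}"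

lemma subgroup_admissible_group: "subgroup admissible_group GL2"
proof
  show "admissible_group \<subseteq> carrier GL2"
    unfolding admissible_group_def using uIN_in_GL2 by blast
  show "\<one>\<^bsub>GL2\<^esub> \<in> admissible_group"
    unfolding admissible_group_def GL2_one uIN_one_zero[symmetric] admissible_def
    using pos_unit_one by force
  fix g h assume "g \<in> admissible_group" and "h \<in> admissible_group"
  then obtain u l1 l2 w m1 m2 where g: "admissible u l1 l2" "g = uIN u l1 l2"
    and h: "admissible w m1 m2" "h = uIN w m1 m2"
    unfolding admissible_group_def by blast
  have "g \<otimes>\<^bsub>GL2\<^esub> h = uIN (u * w) (l1 + u * m1) (l2 + u * m2)"
    using h(1) mmul_uIN unfolding g(2) h(2) GL2_mult admissible_def by blast
  then show "g \<otimes>\<^bsub>GL2\<^esub> h \<in> admissible_group"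
    unfolding admissible_group_def using admissible_mult[OF g(1) h(1)] by blast
  obtain u' where "pos_unit u'" and u': "u * u' = 1"
    using g(1) pos_unit_inverse unfolding admissible_def by metis
  then show "inv\<^bsub>GL2\<^esub> g \<in> admissible_group"
    unfolding admissible_group_def g(2) uIN_inverse(2)[OF g(1) u']
    using admissible_inverse[OF g(1)] by blast
qed

lemma FR_subset_admissible_group: "FR \<subseteq> admissible_group"
proof -
  have "Mgen1 = uIN X 1 0" "admissible X 1 0" "Mgen2 = uIN Y 0 1" "admissible Y 0 1"
    by (auto simp: admissible_def uIN_eq Mgen1_def Mgen2_def pos_unit_def X_def Y_def)
  then have "{Mgen1, Mgen2} \<subseteq> admissible_group"
    unfolding admissible_group_def by blast
  then show ?thesis
    unfolding FR_def by (rule group.generate_subgroup_incl[OF group_GL2 _ subgroup_admissible_group])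
qed

lemma admissible_of_FR:
  assumes "g \<in> FR"
  obtains u l1 l2 where "admissible u l1 l2" and "g = uIN u l1 l2"
  using assms FR_subset_admissible_group unfolding admissible_group_def by blast

lemma subgroup_Sigma_congruence: "subgroup (Sigma_congruence k) GL2"
proof
  show "Sigma_congruence k \<subseteq> carrier GL2"
    unfolding Sigma_congruence_def using uIN_in_GL2 by blast
  show "\<one>\<^bsub>GL2\<^esub> \<in> Sigma_congruence k"
    unfolding Sigma_congruence_def GL2_one uIN_one_zero[symmetric] admissible_def
    using pos_unit_one in_Sigma_pow_zero by force
  fix g h assume "g \<in> Sigma_congruence k" and "h \<in> Sigma_congruence k"
  then obtain l1 l2 m1 m2 where
    g: "admissible 1 l1 l2" "in_Sigma_pow k l1" "in_Sigma_pow k l2" "g = uIN 1 l1 l2"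
    and h: "admissible 1 m1 m2" "in_Sigma_pow k m1" "in_Sigma_pow k m2" "h = uIN 1 m1 m2"
    unfolding Sigma_congruence_def by blast
  have "g \<otimes>\<^bsub>GL2\<^esub> h = uIN 1 (l1 + m1) (l2 + m2)"
    using h(1) mmul_uIN[of m1 m2 1 1 l1 l2] unfolding g(4) h(4) GL2_mult admissible_def by simp
  then show "g \<otimes>\<^bsub>GL2\<^esub> h \<in> Sigma_congruence k"
    unfolding Sigma_congruence_def using admissible_mult[OF g(1) h(1)]
      in_Sigma_pow_add[OF g(2) h(2)] in_Sigma_pow_add[OF g(3) h(3)] by auto
  show "inv\<^bsub>GL2\<^esub> g \<in> Sigma_congruence k"
    unfolding Sigma_congruence_def g(4) uIN_inverse(2)[OF g(1) mult_1]
    using admissible_inverse[OF g(1) pos_unit_one] g in_Sigma_pow_uminus by auto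
qed

lemma commutator_in_Sigma_congruence:
  assumes g: "admissible u l1 l2" and h: "admissible w m1 m2"
    and "in_Sigma_pow k ((1 - w) * l1 + (u - 1) * m1)" and "in_Sigma_pow k ((1 - w) * l2 + (u - 1) * m2)"
  shows "uIN u l1 l2 \<otimes>\<^bsub>GL2\<^esub> uIN w m1 m2 \<otimes>\<^bsub>GL2\<^esub> inv\<^bsub>GL2\<^esub> (uIN u l1 l2) \<otimes>\<^bsub>GL2\<^esub> inv\<^bsub>GL2\<^esub> (uIN w m1 m2)
         \<in> Sigma_congruence k"
  unfolding uIN_commutator[OF g h] Sigma_congruence_def
  using admissible_commutator[OF g h] assms(3,4) by blast

lemma LCS_subset_Sigma_congruence: "LCS (Suc (Suc j)) \<subseteq> Sigma_congruence (Suc j)"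
proof (induction j)
  case 0
  have "g \<otimes>\<^bsub>GL2\<^esub> h \<otimes>\<^bsub>GL2\<^esub> inv\<^bsub>GL2\<^esub> g \<otimes>\<^bsub>GL2\<^esub> inv\<^bsub>GL2\<^esub> h \<in> Sigma_congruence (Suc 0)"
    if "g \<in> FR" and "h \<in> FR" for g h
  proof -
    obtain u l1 l2 where g: "admissible u l1 l2" "g = uIN u l1 l2"
      using \<open>g \<in> FR\<close> by (rule admissible_of_FR)
    obtain w m1 m2 where h: "admissible w m1 m2" "h = uIN w m1 m2"
      using \<open>h \<in> FR\<close> by (rule admissible_of_FR)
    have u: "1 - u \<in> Sigma_ideal" and w: "1 - w \<in> Sigma_ideal"
      using g(1) h(1) one_minus_pos_unit_in_Sigma unfolding admissible_def by blast+
    have "in_Sigma_pow (Suc 0) ((1 - w) * l + (u - 1) * m)" for l m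
      using in_Sigma_pow_add[OF in_Sigma_pow.prod[OF w in_Sigma_pow.pow0]
          in_Sigma_pow_Suc_mult[OF u in_Sigma_pow.pow0]] .
    then show ?thesis
      unfolding g(2) h(2) using commutator_in_Sigma_congruence[OF g(1) h(1)] by blast
  qed
  then show ?case
    by (auto intro!: group.generate_subgroup_incl[OF group_GL2 _ subgroup_Sigma_congruence])
next
  case (Suc j)
  have "g \<otimes>\<^bsub>GL2\<^esub> h \<otimes>\<^bsub>GL2\<^esub> inv\<^bsub>GL2\<^esub> g \<otimes>\<^bsub>GL2\<^esub> inv\<^bsub>GL2\<^esub> h \<in> Sigma_congruence (Suc (Suc j))"
    if "g \<in> FR" and "h \<in> LCS (Suc (Suc j))" for g h
  proof -
    obtain u l1 l2 where g: "admissible u l1 l2" "g = uIN u l1 l2"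
      using \<open>g \<in> FR\<close> by (rule admissible_of_FR)
    obtain m1 m2 where h: "admissible 1 m1 m2" "h = uIN 1 m1 m2"
      and m: "in_Sigma_pow (Suc j) m1" "in_Sigma_pow (Suc j) m2"
      using Suc.IH \<open>h \<in> LCS (Suc (Suc j))\<close> unfolding Sigma_congruence_def by blast
    have "1 - u \<in> Sigma_ideal"
      using g(1) one_minus_pos_unit_in_Sigma unfolding admissible_def by blast
    then have "in_Sigma_pow (Suc (Suc j)) ((1 - 1) * l + (u - 1) * m)" if "m \<in> {m1, m2}" for l m
      using in_Sigma_pow_Suc_mult m that by auto
    then show ?thesis
      unfolding g(2) h(2) using commutator_in_Sigma_congruence[OF g(1) h(1)] by blast
  qed
  then show ?case
    by (auto intro!: group.generate_subgroup_incl[OF group_GL2 _ subgroup_Sigma_congruence])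
qed

lemma msmult_Nmat: "msmult s (Nmat l1 l2) = Nmat (s * l1) (s * l2)"
  by (simp add: Nmat_def mult.assoc)

theorem lemma2:
  fixes M :: mat2 and u l1 l2 :: laurent
  assumes "M \<in> FR"
    and "pos_unit u"
    and "M = madd (msmult u mid) (Nmat l1 l2)"
    and "l1 * (1 - X) + l2 * (1 - Y) = 1 - u"
  shows "(\<forall>n::nat. n > 1 \<longrightarrow>
            M [^]\<^bsub>Mat2\<^esub> n = madd (msmult (u ^ n) mid) (msmult (\<Sum>k<n. u ^ k) (Nmat l1 l2)))
       \<and> (\<forall>j::nat. j \<ge> 1 \<longrightarrow> M \<in> LCS j \<longrightarrow> l1 \<in> Sigma_pow (j - 1) \<and> l2 \<in> Sigma_pow (j - 1))"
proof -
  have M: "M = uIN u l1 l2" using assms(3) unfolding uIN_def .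
  have power: "M [^]\<^bsub>Mat2\<^esub> n = madd (msmult (u ^ n) mid) (msmult (\<Sum>k<n. u ^ k) (Nmat l1 l2))" for n
    unfolding M uIN_pow[OF assms(4)] by (simp only: msmult_Nmat uIN_def)
  have lambda: "l1 \<in> Sigma_pow i \<and> l2 \<in> Sigma_pow i" if M_LCS: "M \<in> LCS (Suc i)" for i
  proof (cases i)
    case 0
    then show ?thesis unfolding Sigma_pow_def by (simp add: in_Sigma_pow.pow0)
  next
    case (Suc k)
    then obtain m1 m2 where "in_Sigma_pow i m1" "in_Sigma_pow i m2" "M = uIN 1 m1 m2"
      using LCS_subset_Sigma_congruence[of k] M_LCS unfolding Suc Sigma_congruence_def by blast
    then show ?thesis
      unfolding Sigma_pow_def using uIN_lambda_unique M by (metis mem_Collect_eq)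
  qed
  have "l1 \<in> Sigma_pow (j - 1) \<and> l2 \<in> Sigma_pow (j - 1)" if "1 \<le> j" and "M \<in> LCS j" for j
    using lambda[of "j - 1"] that by simp
  with power show ?thesis by blast
qed

end
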